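(* Let $I\subset S=K[x_1,\dots,x_t]$ be an $\mathfrak m$-primary monomial ideal. Then $v(I)\le\operatorname{reg}(S/I)$.
   Context: $K$ is a field, $S$ is standard graded and $\mathfrak m=\langle x_1,\dots,x_t\rangle$. For a proper graded ideal $J$, the $v$-number is $v(J)=\min\{k\ge 0 : \exists f\in S_k,\ \mathcal P\in\operatorname{Ass}(S/J) \text{ with } (J:f)=\mathcal P\}$. $\operatorname{reg}$ denotes Castelnuovo–Mumford regularity: $\operatorname{reg}(M)=\max\{j-i : \beta_{i,j}(M)\ne 0\}$ for the graded Betti numbers $\beta_{i,j}$ of a finitely generated graded $S$-module $M$. *)

theory Defs
  imports Main "HOL.Vector_Spaces" "HOL-Library.Poly_Mapping" "HOL-Library.Function_Algebras"
begin

text \<open>The polynomial ring S = K[x_0,...,x_(t-1)] is represented inside the type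
  of finitely supported maps from exponent vectors (nat =>0 nat) to the field 'k,
  restricted to the carrier of polynomials only involving variables with index < t.\<close>

type_synonym 'k pol = "(nat \<Rightarrow>\<^sub>0 nat) \<Rightarrow>\<^sub>0 'k"

definition polys :: "nat \<Rightarrow> 'k::field pol set" where
  "polys t = {p::'k pol. \<forall>m \<in> Poly_Mapping.keys p. Poly_Mapping.keys m \<subseteq> {..<t}}"

definition monom_pol :: "(nat \<Rightarrow>\<^sub>0 nat) \<Rightarrow> 'k::field pol" where
  "monom_pol m = Poly_Mapping.single m 1"

definition xvar :: "nat \<Rightarrow> 'k::field pol" where
  "xvar i = monom_pol (Poly_Mapping.single i 1)"

definition mdeg :: "(nat \<Rightarrow>\<^sub>0 nat) \<Rightarrow> nat" where
  "mdeg m = (\<Sum>i\<in>Poly_Mapping.keys m. Poly_Mapping.lookup m i)"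

text \<open>p lies in S_k (the zero polynomial lies in every S_k).\<close>
definition homog :: "nat \<Rightarrow> 'k::field pol \<Rightarrow> bool" where
  "homog k p \<longleftrightarrow> (\<forall>m \<in> Poly_Mapping.keys p. mdeg m = k)"

definition is_ideal :: "nat \<Rightarrow> 'k::field pol set \<Rightarrow> bool" where
  "is_ideal t J \<longleftrightarrow> J \<subseteq> polys t \<and> 0 \<in> J \<and> (\<forall>a\<in>J. \<forall>b\<in>J. a + b \<in> J)
     \<and> (\<forall>a\<in>J. \<forall>r\<in>polys t. r * a \<in> J)"

definition ideal_gen :: "nat \<Rightarrow> 'k::field pol set \<Rightarrow> 'k pol set" where
  "ideal_gen t G = \<Inter>{J. is_ideal t J \<and> G \<subseteq> J}"

definition prime_ideal :: "nat \<Rightarrow> 'k::field pol set \<Rightarrow> bool" where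
  "prime_ideal t P \<longleftrightarrow> is_ideal t P \<and> P \<noteq> polys t \<and>
     (\<forall>a\<in>polys t. \<forall>b\<in>polys t. a * b \<in> P \<longrightarrow> a \<in> P \<or> b \<in> P)"

definition radical :: "nat \<Rightarrow> 'k::field pol set \<Rightarrow> 'k pol set" where
  "radical t J = {f \<in> polys t. \<exists>n. f ^ n \<in> J}"

definition primary_ideal :: "nat \<Rightarrow> 'k::field pol set \<Rightarrow> bool" where
  "primary_ideal t Q \<longleftrightarrow> is_ideal t Q \<and> Q \<noteq> polys t \<and>
     (\<forall>a\<in>polys t. \<forall>b\<in>polys t. a * b \<in> Q \<longrightarrow> a \<in> Q \<or> b \<in> radical t Q)"

definition max_ideal :: "nat \<Rightarrow> 'k::field pol set" where
  "max_ideal t = ideal_gen t (xvar ` {..<t})"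

definition m_primary :: "nat \<Rightarrow> 'k::field pol set \<Rightarrow> bool" where
  "m_primary t I \<longleftrightarrow> primary_ideal t I \<and> radical t I = max_ideal t"

definition monomial_ideal :: "nat \<Rightarrow> 'k::field pol set \<Rightarrow> bool" where
  "monomial_ideal t I \<longleftrightarrow> is_ideal t I \<and>
     (\<exists>G. G \<subseteq> {m. Poly_Mapping.keys m \<subseteq> {..<t}} \<and> I = ideal_gen t (monom_pol ` G))"

definition colon :: "nat \<Rightarrow> 'k::field pol set \<Rightarrow> 'k pol \<Rightarrow> 'k pol set" where
  "colon t J f = {g \<in> polys t. g * f \<in> J}"

definition ass :: "nat \<Rightarrow> 'k::field pol set \<Rightarrow> 'k pol set set" where
  "ass t J = {P. prime_ideal t P \<and> (\<exists>f\<in>polys t. colon t J f = P)}"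

definition v_number :: "nat \<Rightarrow> 'k::field pol set \<Rightarrow> nat" where
  "v_number t J = (LEAST k. \<exists>f \<in> polys t. homog k f \<and> (\<exists>P \<in> ass t J. colon t J f = P))"

text \<open>Koszul chains: maps from subsets F of {0..t-1} (basis e_F) to polynomials.\<close>
type_synonym 'k chain = "nat set \<Rightarrow> 'k pol"

definition kscale :: "'k::field \<Rightarrow> 'k chain \<Rightarrow> 'k chain" where
  "kscale c z = (\<lambda>F. Poly_Mapping.single 0 c * z F)"

definition chains :: "nat \<Rightarrow> nat \<Rightarrow> 'k::field chain set" where
  "chains t i = {z. \<forall>F. z F \<noteq> 0 \<longrightarrow> F \<subseteq> {..<t} \<and> card F = i \<and> z F \<in> polys t}"

text \<open>Chains homogeneous of total degree j, where deg(u e_F) = deg u + |F|.\<close>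
definition chains_deg :: "nat \<Rightarrow> nat \<Rightarrow> nat \<Rightarrow> 'k::field chain set" where
  "chains_deg t i j = {z \<in> chains t i. \<forall>F. z F \<noteq> 0 \<longrightarrow> i \<le> j \<and> homog (j - i) (z F)}"

text \<open>Koszul differential d(e_F) = sum over k in F of (-1)^(pos of k in F) x_k e_(F-{k}).\<close>
definition kdiff :: "nat \<Rightarrow> 'k::field chain \<Rightarrow> 'k chain" where
  "kdiff t z = (\<lambda>G. \<Sum>k\<in>{..<t} - G.
      (- 1) ^ card {l \<in> G. l < k} * xvar k * z (insert k G))"

text \<open>Cycles and boundaries of the Koszul complex K(x; S/I), computed in K(x; S) modulo I K(x; S).\<close>
definition koszul_cycles :: "nat \<Rightarrow> 'k::field pol set \<Rightarrow> nat \<Rightarrow> nat \<Rightarrow> 'k chain set" where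
  "koszul_cycles t I i j = {z \<in> chains_deg t i j. \<forall>G. kdiff t z G \<in> I}"

definition koszul_boundaries :: "nat \<Rightarrow> 'k::field pol set \<Rightarrow> nat \<Rightarrow> nat \<Rightarrow> 'k chain set" where
  "koszul_boundaries t I i j =
     {(\<lambda>F. kdiff t w F + y F) | w y. w \<in> chains_deg t (Suc i) j \<and> y \<in> chains_deg t i j
        \<and> (\<forall>F. y F \<in> I)}"

text \<open>beta_{i,j}(S/I) = dim_K Tor_i(K, S/I)_j = dim_K H_i(x; S/I)_j.\<close>
definition betti :: "nat \<Rightarrow> 'k::field pol set \<Rightarrow> nat \<Rightarrow> nat \<Rightarrow> nat" where
  "betti t I i j = vector_space.dim kscale (koszul_cycles t I i j)
                   - vector_space.dim kscale (koszul_boundaries t I i j)"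

definition reg_quot :: "nat \<Rightarrow> 'k::field pol set \<Rightarrow> int" where
  "reg_quot t I = Max {int j - int i | i j. betti t I i j \<noteq> 0}"

end

(* Since I is m-primary, S/I vanishes in large degrees, so there is a monomial f not in I
   of maximal degree d. Then x_k f is in I for every k: f lies in the socle of S/I, and
   (I : f) = m is an associated prime of S/I, whence v(I) <= d. On the Koszul side,
   f e_{0..t-1} is a cycle of K(x; S/I) in homological degree t and internal degree d + t,
   and it is not a boundary because K_{t+1} = 0. So beta_{t,d+t}(S/I) is nonzero and
   reg(S/I) >= d. *)
theory Submission
  imports Defs
begin

context vector_space
begin

text \<open>dim V is 0 when span V has no finite basis, hence the finiteness hypotheses.\<close>

lemma dim_le_if_subset_span:
  assumes "V \<subseteq> span W" "W \<subseteq> span X" "finite X"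
  shows "dim V \<le> dim W"
proof -
  obtain B where B: "B \<subseteq> W" "independent B" "W \<subseteq> span B" "card B = dim W"
    by (rule basis_exists)
  have "finite B"
    using independent_span_bound[OF assms(3) B(2)] B(1) assms(2) by auto
  have "span W \<subseteq> span B"
    using B(3) span_minimal subspace_span by blast
  then have "dim V \<le> card B"
    using assms(1) dim_le_card[OF _ \<open>finite B\<close>] by blast
  then show ?thesis using B(4) by simp
qed

lemma dim_less_if_notin_span:
  assumes "W \<subseteq> span V" "V \<subseteq> span X" "finite X" "v \<in> V" "v \<notin> span W"
  shows "dim W < dim V"
proof -
  obtain B where B: "B \<subseteq> W" "independent B" "W \<subseteq> span B" "card B = dim W"
    by (rule basis_exists)
  have "span V \<subseteq> span X"
    using assms(2) span_minimal subspace_span by blast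
  then have "finite B"
    using independent_span_bound[OF assms(3) B(2)] B(1) assms(1) by auto
  have "v \<notin> span B"
    using assms(5) span_mono[OF B(1)] by blast
  then have indep: "independent (insert v B)" and "v \<notin> B"
    using independent_insertI[OF _ B(2)] span_base by blast+
  have "insert v B \<subseteq> span V"
    using assms(1,4) B(1) span_base by blast
  then have "dim (insert v B) \<le> dim V"
    using dim_le_if_subset_span assms(2,3) by blast
  then show ?thesis
    using dim_eq_card_independent[OF indep] \<open>finite B\<close> \<open>v \<notin> B\<close> B(4) by simp
qed

end

lemma vector_space_kscale: "vector_space (kscale :: 'k::field \<Rightarrow> 'k chain \<Rightarrow> 'k chain)"
  unfolding vector_space_def kscale_def
  by (auto simp: fun_eq_iff distrib_left distrib_right single_add mult_single mult.assoc)

interpretation chain: vector_space "kscale :: 'k::field \<Rightarrow> 'k chain \<Rightarrow> 'k chain"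
  by (rule vector_space_kscale)

subsection \<open>Polynomials, monomials and ideals\<close>

lemma polys_mult: "p \<in> polys t \<Longrightarrow> q \<in> polys t \<Longrightarrow> p * q \<in> polys t"
  unfolding polys_def by (fastforce dest: set_mp[OF keys_mult] set_mp[OF keys_add])

lemma polys_add: "p \<in> polys t \<Longrightarrow> q \<in> polys t \<Longrightarrow> p + q \<in> polys t"
  unfolding polys_def by (fastforce dest: set_mp[OF keys_add])

lemma polys_one: "1 \<in> polys t"
  unfolding polys_def by simp

lemma polys_single_0: "Poly_Mapping.single 0 c \<in> polys t"
  unfolding polys_def by simp

lemma polys_pow: "p \<in> polys t \<Longrightarrow> p ^ n \<in> polys t"
  by (induction n) (auto intro: polys_mult polys_one)

lemma polys_monom_pol: "Poly_Mapping.keys m \<subseteq> {..<t} \<Longrightarrow> monom_pol m \<in> polys t"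
  unfolding polys_def monom_pol_def by auto

lemma polys_xvar: "k < t \<Longrightarrow> xvar k \<in> polys t"
  unfolding xvar_def by (rule polys_monom_pol) auto

lemma polys_minus_one_power: "(- 1) ^ n \<in> polys t"
  by (rule polys_pow) (simp add: polys_def keys_minus)

lemma monom_pol_add: "monom_pol (a + b) = (monom_pol a * monom_pol b :: 'k::field pol)"
  by (simp add: monom_pol_def mult_single)

lemma xvar_power: "(xvar k :: 'k::field pol) ^ n = monom_pol (Poly_Mapping.single k n)"
  by (induction n) (simp_all add: monom_pol_def xvar_def mult_single flip: single_add)

lemma homog_monom_pol: "homog (mdeg m) (monom_pol m :: 'k::field pol)"
  unfolding homog_def monom_pol_def by simp

lemma mdeg_add: "mdeg (a + b) = mdeg a + mdeg b"
proof -
  let ?K = "Poly_Mapping.keys a \<union> Poly_Mapping.keys b"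
  have restrict: "mdeg m = (\<Sum>i\<in>?K. Poly_Mapping.lookup m i)" if "Poly_Mapping.keys m \<subseteq> ?K" for m
    unfolding mdeg_def using that by (intro sum.mono_neutral_left) (auto simp: in_keys_iff)
  have "Poly_Mapping.keys (a + b) \<subseteq> ?K" by (rule keys_add)
  then show ?thesis
    by (simp add: restrict lookup_add sum.distrib)
qed

lemma mdeg_single: "mdeg (Poly_Mapping.single k n) = n"
  by (simp add: mdeg_def)

lemma mdeg_eq_sum_lessThan:
  "Poly_Mapping.keys m \<subseteq> {..<t} \<Longrightarrow> mdeg m = (\<Sum>i<t. Poly_Mapping.lookup m i)"
  unfolding mdeg_def by (rule sum.mono_neutral_left) (auto simp: in_keys_iff)

lemma sum_monom_pol_keys:
  "(\<Sum>m\<in>Poly_Mapping.keys p. Poly_Mapping.single 0 (Poly_Mapping.lookup p m) * monom_pol m) = p"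
  (is "?S = p")
proof (rule poly_mapping_eqI)
  fix k
  have "Poly_Mapping.lookup ?S k
      = (\<Sum>m\<in>Poly_Mapping.keys p. if m = k then Poly_Mapping.lookup p m else 0)"
    by (auto simp: lookup_sum monom_pol_def mult_single lookup_single when_def intro!: sum.cong)
  also have "\<dots> = Poly_Mapping.lookup p k" by (auto simp: in_keys_iff)
  finally show "Poly_Mapping.lookup ?S k = Poly_Mapping.lookup p k" .
qed

lemma ideal_mult: "is_ideal t I \<Longrightarrow> a \<in> I \<Longrightarrow> r \<in> polys t \<Longrightarrow> r * a \<in> I"
  unfolding is_ideal_def by blast

lemma ideal_sum: "is_ideal t I \<Longrightarrow> (\<And>x. x \<in> A \<Longrightarrow> f x \<in> I) \<Longrightarrow> sum f A \<in> I"
  by (induction A rule: infinite_finite_induct) (auto simp: is_ideal_def)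

lemma ideal_mem_if_monomials_mem:
  assumes "is_ideal t I" "\<And>m. m \<in> Poly_Mapping.keys p \<Longrightarrow> monom_pol m \<in> I"
  shows "p \<in> I"
proof -
  have "(\<Sum>m\<in>Poly_Mapping.keys p. Poly_Mapping.single 0 (Poly_Mapping.lookup p m) * monom_pol m) \<in> I"
    using assms by (intro ideal_sum ideal_mult polys_single_0)
  then show ?thesis by (simp only: sum_monom_pol_keys)
qed

lemma colon_is_ideal: "is_ideal t I \<Longrightarrow> f \<in> polys t \<Longrightarrow> is_ideal t (colon t I f)"
  unfolding is_ideal_def colon_def
  by (auto simp: distrib_right mult.assoc intro: polys_mult polys_add)

lemma v_number_le:
  assumes "f \<in> polys t" "homog d f" "colon t J f \<in> ass t J"
  shows "v_number t J \<le> d"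
  unfolding v_number_def using assms by (intro Least_le) blast

subsection \<open>The socle of an m-primary ideal\<close>

lemma m_primary_is_ideal: "m_primary t I \<Longrightarrow> is_ideal t I"
  by (simp add: m_primary_def primary_ideal_def)

lemma primary_ideal_one_notin: "primary_ideal t Q \<Longrightarrow> 1 \<notin> Q"
  unfolding primary_ideal_def is_ideal_def
  by (metis mult.right_neutral subsetI subset_antisym)

lemma m_primary_xvar_power_mem:
  assumes "m_primary t I" "k < t"
  shows "\<exists>n. monom_pol (Poly_Mapping.single k n) \<in> I"
proof -
  have "xvar k \<in> max_ideal t"
    unfolding max_ideal_def ideal_gen_def using assms(2) by blast
  then have "xvar k \<in> radical t I"
    using assms(1) by (simp add: m_primary_def)
  then show ?thesis
    by (auto simp: radical_def xvar_power)
qed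

lemma m_primary_standard_monomials_bounded:
  assumes "m_primary t I"
  obtains N where "\<And>m. Poly_Mapping.keys m \<subseteq> {..<t} \<Longrightarrow> monom_pol m \<notin> I \<Longrightarrow> mdeg m < N"
proof -
  obtain n where n: "\<And>k. k < t \<Longrightarrow> monom_pol (Poly_Mapping.single k (n k)) \<in> I"
    using m_primary_xvar_power_mem[OF assms] by metis
  have lookup_less: "Poly_Mapping.lookup m k < n k"
    if m: "Poly_Mapping.keys m \<subseteq> {..<t}" "monom_pol m \<notin> I" and "k < t" for m k
  proof (rule ccontr)
    assume "\<not> Poly_Mapping.lookup m k < n k"
    define m' where "m' = m - Poly_Mapping.single k (n k)"
    have "m = m' + Poly_Mapping.single k (n k)"
      using \<open>\<not> _ < n k\<close>
      by (intro poly_mapping_eqI) (auto simp: m'_def lookup_add lookup_minus lookup_single when_def)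
    moreover have "Poly_Mapping.keys m' \<subseteq> Poly_Mapping.keys m"
      by (auto simp: m'_def in_keys_iff lookup_minus)
    ultimately have "monom_pol m \<in> I"
      using m(1) ideal_mult[OF m_primary_is_ideal[OF assms] n[OF \<open>k < t\<close>] polys_monom_pol]
      by (simp add: monom_pol_add)
    with m(2) show False ..
  qed
  have "mdeg m \<le> (\<Sum>k<t. n k)"
    if "Poly_Mapping.keys m \<subseteq> {..<t}" "monom_pol m \<notin> I" for m
    unfolding mdeg_eq_sum_lessThan[OF that(1)]
    by (rule sum_mono) (use lookup_less[OF that] in \<open>simp add: less_imp_le_nat\<close>)
  then show ?thesis
    using that[of "Suc (\<Sum>k<t. n k)"] by (simp add: less_Suc_eq_le)
qed

lemma m_primary_homog_mem:
  assumes "m_primary t I"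
  obtains N where "\<And>p d. p \<in> polys t \<Longrightarrow> homog d p \<Longrightarrow> N \<le> d \<Longrightarrow> p \<in> I"
proof -
  obtain N where N: "\<And>m. Poly_Mapping.keys m \<subseteq> {..<t} \<Longrightarrow> monom_pol m \<notin> I \<Longrightarrow> mdeg m < N"
    using m_primary_standard_monomials_bounded[OF assms] by blast
  have "p \<in> I" if p: "p \<in> polys t" "homog d p" "N \<le> d" for p d
  proof (rule ideal_mem_if_monomials_mem[OF m_primary_is_ideal[OF assms]])
    fix m assume "m \<in> Poly_Mapping.keys p"
    then have "Poly_Mapping.keys m \<subseteq> {..<t}" "mdeg m = d"
      using p(1,2) unfolding polys_def homog_def by auto
    then show "monom_pol m \<in> I"
      using N p(3) by (meson leD)
  qed
  then show ?thesis by (rule that)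
qed

lemma m_primary_socle_monomial:
  assumes "m_primary t I"
  obtains m where "Poly_Mapping.keys m \<subseteq> {..<t}" "monom_pol m \<notin> I"
    "\<And>k. k < t \<Longrightarrow> xvar k * monom_pol m \<in> I"
proof -
  define M where "M = {m. Poly_Mapping.keys m \<subseteq> {..<t} \<and> monom_pol m \<notin> I}"
  obtain N where N: "\<And>m. Poly_Mapping.keys m \<subseteq> {..<t} \<Longrightarrow> monom_pol m \<notin> I \<Longrightarrow> mdeg m < N"
    using m_primary_standard_monomials_bounded[OF assms] by blast
  have "mdeg ` M \<subseteq> {..<N}"
    using N by (auto simp: M_def)
  then have fin: "finite (mdeg ` M)"
    by (rule finite_subset) simp
  have "1 \<notin> I"
    using assms by (intro primary_ideal_one_notin[of t]) (simp add: m_primary_def)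
  then have "0 \<in> M"
    by (simp add: M_def monom_pol_def)
  then have "Max (mdeg ` M) \<in> mdeg ` M"
    using fin by (intro Max_in) auto
  then obtain m where m: "m \<in> M" "mdeg m = Max (mdeg ` M)"
    by auto
  show ?thesis
  proof (rule that)
    show "Poly_Mapping.keys m \<subseteq> {..<t}" "monom_pol m \<notin> I" using m(1) by (auto simp: M_def)
    fix k assume "k < t"
    let ?m = "Poly_Mapping.single k 1 + m"
    have "mdeg ?m = mdeg m + 1"
      by (simp add: mdeg_add mdeg_single)
    then have "?m \<notin> M"
      using m(2) Max_ge[OF fin] by fastforce
    moreover have "Poly_Mapping.keys ?m \<subseteq> {..<t}"
      using keys_add[of "Poly_Mapping.single k (1::nat)" m] \<open>k < t\<close> m(1) by (auto simp: M_def)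
    ultimately show "xvar k * monom_pol m \<in> I" by (simp add: M_def monom_pol_add xvar_def)
  qed
qed

lemma m_primary_colon_socle_eq_radical:
  assumes "m_primary t I" "f \<in> polys t" "f \<notin> I" "\<And>k. k < t \<Longrightarrow> xvar k * f \<in> I"
  shows "colon t I f = radical t I"
proof
  have "max_ideal t \<subseteq> colon t I f"
    unfolding max_ideal_def
    using colon_is_ideal[OF m_primary_is_ideal[OF assms(1)] assms(2)] assms(4)
    by (auto simp: ideal_gen_def colon_def polys_xvar)
  then show "radical t I \<subseteq> colon t I f"
    using assms(1) by (simp add: m_primary_def)
  show "colon t I f \<subseteq> radical t I"
    using assms(1-3) by (auto simp: colon_def m_primary_def primary_ideal_def mult.commute)
qed

text \<open>That radicals are ideals needs the binomial theorem; it is assumed here and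
  discharged for I through the equality (I : f) = rad I above.\<close>

lemma primary_radical_prime:
  assumes "primary_ideal t Q" "is_ideal t (radical t Q)"
  shows "prime_ideal t (radical t Q)"
  unfolding prime_ideal_def
proof (intro conjI ballI impI)
  show "is_ideal t (radical t Q)" by fact
  have "1 \<notin> radical t Q"
    using primary_ideal_one_notin[OF assms(1)] by (simp add: radical_def)
  then show "radical t Q \<noteq> polys t"
    using polys_one by blast
  fix a b assume ab: "a \<in> polys t" "b \<in> polys t" "a * b \<in> radical t Q"
  then obtain n where "a ^ n * b ^ n \<in> Q"
    by (auto simp: radical_def power_mult_distrib)
  then have "a ^ n \<in> Q \<or> b ^ n \<in> radical t Q"
    using assms(1) ab(1,2) polys_pow unfolding primary_ideal_def by blast
  then show "a \<in> radical t Q \<or> b \<in> radical t Q"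
    using ab(1,2) by (auto simp: radical_def power_mult[symmetric])
qed

lemma m_primary_colon_socle_in_ass:
  assumes "m_primary t I" "f \<in> polys t" "f \<notin> I" "\<And>k. k < t \<Longrightarrow> xvar k * f \<in> I"
  shows "colon t I f \<in> ass t I"
proof -
  have colon_eq: "colon t I f = radical t I"
    by (rule m_primary_colon_socle_eq_radical[OF assms])
  have "is_ideal t (radical t I)"
    using colon_is_ideal[OF m_primary_is_ideal[OF assms(1)] assms(2)] by (simp add: colon_eq)
  then have "prime_ideal t (radical t I)"
    using assms(1) by (intro primary_radical_prime) (simp_all add: m_primary_def)
  then show ?thesis
    unfolding ass_def colon_eq using assms(2) colon_eq by blast
qed

subsection \<open>Koszul homology\<close>

definition basis_chain :: "nat set \<Rightarrow> (nat \<Rightarrow>\<^sub>0 nat) \<Rightarrow> 'k::field chain" where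
  "basis_chain F m = (\<lambda>G. if G = F then monom_pol m else 0)"

definition monomial_chains :: "nat \<Rightarrow> nat \<Rightarrow> nat \<Rightarrow> 'k::field chain set" where
  "monomial_chains t i j = (\<lambda>(F, m). basis_chain F m) `
     (Pow {..<t} \<times> {m. Poly_Mapping.keys m \<subseteq> {..<t} \<and> mdeg m = j - i})"

lemma lookup_le_mdeg: "Poly_Mapping.lookup m x \<le> mdeg m"
  by (cases "x \<in> Poly_Mapping.keys m") (auto simp: mdeg_def in_keys_iff intro: member_le_sum)

lemma finite_monomials_of_degree:
  "finite {m :: nat \<Rightarrow>\<^sub>0 nat. Poly_Mapping.keys m \<subseteq> {..<t} \<and> mdeg m = d}"
  (is "finite ?M")
proof -
  have "Poly_Mapping.lookup ` ?M \<subseteq>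
      {f. \<forall>x. (x \<in> {..<t} \<longrightarrow> f x \<in> {..d}) \<and> (x \<notin> {..<t} \<longrightarrow> f x = 0)}"
    using lookup_le_mdeg by (auto simp: in_keys_iff)
  then have "finite (Poly_Mapping.lookup ` ?M)"
    by (rule finite_subset) (intro finite_set_of_finite_funs; simp)
  moreover have "inj_on Poly_Mapping.lookup ?M"
    by (simp add: inj_on_def poly_mapping.lookup_inject)
  ultimately show ?thesis
    by (rule finite_imageD)
qed

lemma finite_monomial_chains: "finite (monomial_chains t i j)"
  unfolding monomial_chains_def
  by (intro finite_imageI finite_cartesian_product finite_monomials_of_degree) auto

lemma sum_fun_apply: "(\<Sum>a\<in>A. f a) x = (\<Sum>a\<in>A. f a x)"
  by (induction A rule: infinite_finite_induct) auto

lemma chains_deg_subset_span: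
  "chains_deg t i j \<subseteq> chain.span (monomial_chains t i j :: 'k::field chain set)"
proof
  fix z :: "'k chain" assume z: "z \<in> chains_deg t i j"
  let ?S = "\<Sum>F\<in>Pow {..<t}. \<Sum>m\<in>Poly_Mapping.keys (z F).
              kscale (Poly_Mapping.lookup (z F) m) (basis_chain F m) :: 'k chain"
  have "?S \<in> chain.span (monomial_chains t i j)"
  proof (intro chain.span_sum chain.span_scale chain.span_base)
    fix F m assume F: "F \<in> Pow {..<t}" and m: "m \<in> Poly_Mapping.keys (z F)"
    then have "z F \<noteq> 0" by auto
    then have "Poly_Mapping.keys m \<subseteq> {..<t}" "mdeg m = j - i"
      using z m by (auto simp: chains_deg_def chains_def polys_def homog_def)
    then show "basis_chain F m \<in> monomial_chains t i j"
      unfolding monomial_chains_def using F by force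
  qed
  moreover have "?S = z"
  proof
    fix G
    have "?S G = (\<Sum>F\<in>Pow {..<t}. \<Sum>m\<in>Poly_Mapping.keys (z F).
        if G = F then Poly_Mapping.single 0 (Poly_Mapping.lookup (z F) m) * monom_pol m else 0)"
      by (auto simp: sum_fun_apply kscale_def basis_chain_def intro!: sum.cong)
    also have "\<dots> = (\<Sum>F\<in>Pow {..<t}. if G = F then (\<Sum>m\<in>Poly_Mapping.keys (z F).
        Poly_Mapping.single 0 (Poly_Mapping.lookup (z F) m) * monom_pol m) else 0)"
      by (rule sum.cong) auto
    also have "\<dots> = z G"
      using z by (auto simp: sum_monom_pol_keys chains_deg_def chains_def)
    finally show "?S G = z G" .
  qed
  ultimately show "z \<in> chain.span (monomial_chains t i j)" by simp
qed

lemma kdiff_add: "kdiff t (a + b) = kdiff t a + kdiff t b"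
  by (rule ext) (simp add: kdiff_def distrib_left sum.distrib)

lemma kdiff_zero: "kdiff t 0 = 0"
  by (rule ext) (simp add: kdiff_def)

lemma kdiff_kscale: "kdiff t (kscale c a) = kscale c (kdiff t a)"
  by (rule ext) (simp add: kdiff_def kscale_def sum_distrib_left mult.left_commute)

lemma kdiff_span_subset: "kdiff t ` chain.span X \<subseteq> chain.span (kdiff t ` X)"
proof -
  have "chain.span X \<subseteq> {w. kdiff t w \<in> chain.span (kdiff t ` X)}"
    by (rule chain.span_minimal)
      (auto simp: chain.subspace_def kdiff_add kdiff_zero kdiff_kscale
        intro: chain.span_base chain.span_add chain.span_scale chain.span_zero)
  then show ?thesis by auto
qed

lemma kdiff_mem_ideal:
  assumes "is_ideal t I" "\<And>k. k \<in> {..<t} - G \<Longrightarrow> xvar k * z (insert k G) \<in> I"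
  shows "kdiff t z G \<in> I"
  unfolding kdiff_def mult.assoc
  by (intro ideal_sum[OF assms(1)] ideal_mult[OF assms(1) assms(2)] polys_minus_one_power)

lemma koszul_homology_finite_span:
  obtains X :: "'k::field chain set" where "finite X"
    "koszul_cycles t I i j \<union> koszul_boundaries t I i j \<subseteq> chain.span X"
proof
  let ?X = "monomial_chains t i j \<union> kdiff t ` monomial_chains t (Suc i) j :: 'k chain set"
  show "finite ?X" by (simp add: finite_monomial_chains)
  have chains: "chains_deg t i j \<subseteq> chain.span ?X"
    using chains_deg_subset_span chain.span_mono[of _ ?X] by blast
  have "kdiff t ` chains_deg t (Suc i) j \<subseteq> chain.span ?X"
    using chains_deg_subset_span[of t "Suc i" j] kdiff_span_subset
      chain.span_mono[of "kdiff t ` monomial_chains t (Suc i) j" ?X] by blast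
  then show "koszul_cycles t I i j \<union> koszul_boundaries t I i j \<subseteq> chain.span ?X"
    using chains unfolding koszul_cycles_def koszul_boundaries_def
    by (auto intro!: chain.span_add[of "kdiff t _" ?X, unfolded plus_fun_def])
qed

lemma betti_eq_0_if_cycles_subset_boundaries:
  fixes I :: "'k::field pol set"
  assumes "koszul_cycles t I i j \<subseteq> koszul_boundaries t I i j"
  shows "betti t I i j = 0"
proof -
  obtain X :: "'k chain set" where "finite X"
    "koszul_cycles t I i j \<union> koszul_boundaries t I i j \<subseteq> chain.span X"
    by (rule koszul_homology_finite_span)
  then have "chain.dim (koszul_cycles t I i j) \<le> chain.dim (koszul_boundaries t I i j)"
    using assms by (intro chain.dim_le_if_subset_span) (auto intro: chain.span_base)
  then show ?thesis unfolding betti_def by simp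
qed

lemma betti_neq_0_if_cycle_notin_span:
  fixes I :: "'k::field pol set"
  assumes "koszul_boundaries t I i j \<subseteq> koszul_cycles t I i j" "z \<in> koszul_cycles t I i j"
    "z \<notin> chain.span (koszul_boundaries t I i j)"
  shows "betti t I i j \<noteq> 0"
proof -
  obtain X :: "'k chain set" where "finite X"
    "koszul_cycles t I i j \<union> koszul_boundaries t I i j \<subseteq> chain.span X"
    by (rule koszul_homology_finite_span)
  then have "chain.dim (koszul_boundaries t I i j) < chain.dim (koszul_cycles t I i j)"
    using assms by (intro chain.dim_less_if_notin_span) (auto intro: chain.span_base)
  then show ?thesis unfolding betti_def by simp
qed

text \<open>A chain with all coefficients in I is a boundary (take w = 0 in the definition).\<close>

lemma betti_eq_0_if_homog_mem:
  fixes I :: "'k::field pol set"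
  assumes "is_ideal t I" "i \<le> j \<Longrightarrow> \<forall>p\<in>polys t. homog (j - i) p \<longrightarrow> p \<in> I"
  shows "betti t I i j = 0"
proof (rule betti_eq_0_if_cycles_subset_boundaries, rule subsetI)
  fix z assume "z \<in> koszul_cycles t I i j"
  then have z: "z \<in> chains_deg t i j" by (simp add: koszul_cycles_def)
  then have "z F \<in> I" for F
    using assms by (cases "z F = 0") (auto simp: chains_deg_def chains_def is_ideal_def)
  moreover have "0 \<in> chains_deg t (Suc i) j" by (simp add: chains_deg_def chains_def)
  ultimately show "z \<in> koszul_boundaries t I i j"
    unfolding koszul_boundaries_def using z by (force simp: kdiff_zero)
qed

lemma m_primary_finite_betti_degrees:
  assumes "m_primary t I"
  shows "finite {int j - int i | i j. betti t I i j \<noteq> 0}"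
proof -
  obtain N where N: "\<And>p d. p \<in> polys t \<Longrightarrow> homog d p \<Longrightarrow> N \<le> d \<Longrightarrow> p \<in> I"
    using m_primary_homog_mem[OF assms] by blast
  have bounded: "i \<le> j \<and> j - i < N" if "betti t I i j \<noteq> 0" for i j
  proof (rule ccontr)
    assume "\<not> (i \<le> j \<and> j - i < N)"
    then have "betti t I i j = 0"
      using N by (intro betti_eq_0_if_homog_mem[OF m_primary_is_ideal[OF assms]]) auto
    with that show False ..
  qed
  have "{int j - int i | i j. betti t I i j \<noteq> 0} \<subseteq> int ` {..<N}"
  proof
    fix x assume "x \<in> {int j - int i | i j. betti t I i j \<noteq> 0}"
    then obtain i j where "x = int j - int i" "betti t I i j \<noteq> 0" by blast
    with bounded show "x \<in> int ` {..<N}"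
      by (intro image_eqI[of _ _ "j - i"]) auto
  qed
  then show ?thesis by (rule finite_subset) simp
qed

lemma chains_deg_eq_0_if_gt:
  assumes "t < i"
  shows "chains_deg t i j = {0 :: 'k::field chain}"
proof -
  have "w F = 0" if "w \<in> chains_deg t i j" for w :: "'k chain" and F
  proof (rule ccontr)
    assume "w F \<noteq> 0"
    then have "F \<subseteq> {..<t}" "card F = i"
      using that by (auto simp: chains_deg_def chains_def)
    then show False
      using card_mono[of "{..<t}" F] assms by simp
  qed
  moreover have "0 \<in> chains_deg t i j"
    by (simp add: chains_deg_def chains_def)
  ultimately show ?thesis
    by (auto simp: fun_eq_iff)
qed

text \<open>Since there are no Koszul chains in homological degree t + 1, the boundaries in
  degree t are the chains with coefficient in I, and f e_{0..t-1} is a cycle outside them.\<close>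

lemma betti_top_neq_0_if_socle:
  fixes I :: "'k::field pol set"
  assumes "is_ideal t I" "f \<in> polys t" "homog d f" "f \<notin> I"
    "\<And>k. k < t \<Longrightarrow> xvar k * f \<in> I"
  shows "betti t I t (d + t) \<noteq> 0"
proof -
  define z :: "'k chain" where "z = (\<lambda>G. if G = {..<t} then f else 0)"
  have "kdiff t z G \<in> I" for G
    using assms(1,5) by (intro kdiff_mem_ideal) (auto simp: z_def is_ideal_def)
  then have cycle: "z \<in> koszul_cycles t I t (d + t)"
    using assms(2,3) by (auto simp: z_def koszul_cycles_def chains_deg_def chains_def)
  have "kdiff t y G \<in> I" if "\<forall>F. y F \<in> I" for y :: "'k chain" and G
    using assms(1) that by (intro kdiff_mem_ideal ideal_mult polys_xvar) auto
  then have boundaries_cycles: "koszul_boundaries t I t (d + t) \<subseteq> koszul_cycles t I t (d + t)"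
    by (auto simp: koszul_boundaries_def koszul_cycles_def chains_deg_eq_0_if_gt[of t "Suc t"] kdiff_zero)
  have "chain.span (koszul_boundaries t I t (d + t)) \<subseteq> {y. y {..<t} \<in> I}"
    using assms(1)
    by (intro chain.span_minimal)
      (auto simp: koszul_boundaries_def kdiff_def chain.subspace_def kscale_def is_ideal_def
        polys_single_0)
  then have "z \<notin> chain.span (koszul_boundaries t I t (d + t))"
    using assms(4) by (auto simp: z_def)
  then show ?thesis
    by (rule betti_neq_0_if_cycle_notin_span[OF boundaries_cycles cycle])
qed

theorem theorem4p19:
  fixes t :: nat and I :: "'k::field pol set"
  assumes "monomial_ideal t I"
    and "m_primary t I"
  shows "int (v_number t I) \<le> reg_quot t I"
proof -
  \<comment> \<open>The argument does not use that I is a monomial ideal.\<close>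
  obtain m where m: "Poly_Mapping.keys m \<subseteq> {..<t}" "monom_pol m \<notin> I"
    "\<And>k. k < t \<Longrightarrow> xvar k * monom_pol m \<in> I"
    using m_primary_socle_monomial[OF assms(2)] by blast
  let ?f = "monom_pol m :: 'k pol" and ?d = "mdeg m"
  have f: "?f \<in> polys t" "homog ?d ?f"
    using m(1) by (simp_all add: polys_monom_pol homog_monom_pol)
  have v_number: "v_number t I \<le> ?d"
    using f m_primary_colon_socle_in_ass[OF assms(2) f(1) m(2,3)] by (rule v_number_le)
  have "betti t I t (?d + t) \<noteq> 0"
    by (rule betti_top_neq_0_if_socle[OF m_primary_is_ideal[OF assms(2)] f m(2,3)])
  then have "int ?d \<le> reg_quot t I"
    unfolding reg_quot_def
    by (intro Max_ge[OF m_primary_finite_betti_degrees[OF assms(2)]]) force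
  with v_number show ?thesis by simp
qed

end
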